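(* Let $G(T)$ be the graph inverse semigroup of the unary tree $T$, endowed with a Hausdorff topology $\tau$ making it a topological semigroup. Then $(G(T),\tau)$ embeds (as a subsemigroup and topological subspace) densely into a CLP-compact topological semigroup $S$ if and only if $(G(T),\tau)$ is compact, i.e., $\tau=\tau_c$.
   Context: All spaces are Hausdorff; CLP-compact means every cover by clopen sets has a finite subcover. The unary tree $T$ has vertex set $\omega$ and edges $(n,n+1)$ with source $n$ and range $n+1$. The graph inverse semigroup $G(T)$ is the semigroup with zero $0$ generated by the vertices, the edges and formal inverses $e^{-1}$ of edges subject to: for vertices $a,b$: $ab=a$ if $a=b$, else $0$; for edges $e,f$: $s(e)e=er(e)=e$, $e^{-1}s(e)=r(e)e^{-1}=e^{-1}$, $e^{-1}f=r(e)$ if $e=f$, else $0$. The topology $\tau_c$ on $G(T)$: non-zero elements are isolated and the open neighborhoods of $0$ are the cofinite subsets containing $0$. *)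

theory Defs
  imports "HOL-Analysis.Analysis"
begin

text \<open>Graph inverse semigroup G(T) of the unary tree T (vertices \<omega>, edges (n,n+1)).
  Every path of T is determined by its source n and range m with n \<le> m.
  Every non-zero element of G(T) has the unique normal form u v^-1 with u, v paths
  and r(u) = r(v); we write GEl i j k for u v^-1 where u is the path from i to k and
  v the path from j to k (so i \<le> k, j \<le> k).  The vertex n is GEl n n n, the edge
  (n,n+1) is GEl n (n+1) (n+1) and its inverse is GEl (n+1) n (n+1).\<close>

datatype gt = GZero | GEl nat nat nat

definition GT :: "gt set" where
  "GT = insert GZero {GEl i j k | i j k. i \<le> k \<and> j \<le> k}"

text \<open>Multiplication: (u v^-1)(w z^-1) is non-zero iff one of v, w is a prefix of the
  other; in the unary tree this happens iff s(v) = s(w).\<close>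
fun gt_mult :: "gt \<Rightarrow> gt \<Rightarrow> gt" where
  "gt_mult (GEl i j k) (GEl j' l k') = (if j = j' then GEl i l (max k k') else GZero)"
| "gt_mult _ _ = GZero"

definition tau_c :: "gt topology" where
  "tau_c = topology (\<lambda>U. U \<subseteq> GT \<and> (GZero \<in> U \<longrightarrow> finite (GT - U)))"

definition is_semitop_topology :: "gt topology \<Rightarrow> bool" where
  "is_semitop_topology \<tau> \<longleftrightarrow> topspace \<tau> = GT \<and> Hausdorff_space \<tau> \<and>
     continuous_map (prod_topology \<tau> \<tau>) \<tau> (\<lambda>(x, y). gt_mult x y)"

definition CLP_compact :: "'a topology \<Rightarrow> bool" where
  "CLP_compact X \<longleftrightarrow> (\<forall>\<U>. (\<forall>U\<in>\<U>. closedin X U \<and> openin X U) \<and> topspace X \<subseteq> \<Union>\<U>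
       \<longrightarrow> (\<exists>\<F>. finite \<F> \<and> \<F> \<subseteq> \<U> \<and> topspace X \<subseteq> \<Union>\<F>))"

definition top_semigroup :: "'a topology \<Rightarrow> ('a \<Rightarrow> 'a \<Rightarrow> 'a) \<Rightarrow> bool" where
  "top_semigroup X m \<longleftrightarrow> Hausdorff_space X \<and>
     (\<forall>x\<in>topspace X. \<forall>y\<in>topspace X. m x y \<in> topspace X) \<and>
     (\<forall>x\<in>topspace X. \<forall>y\<in>topspace X. \<forall>z\<in>topspace X. m (m x y) z = m x (m y z)) \<and>
     continuous_map (prod_topology X X) X (\<lambda>(x, y). m x y)"

definition dense_embeds :: "gt topology \<Rightarrow> 'a topology \<Rightarrow> ('a \<Rightarrow> 'a \<Rightarrow> 'a) \<Rightarrow> bool" where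
  "dense_embeds \<tau> X m \<longleftrightarrow> (\<exists>f. embedding_map \<tau> X f \<and>
     (\<forall>x\<in>GT. \<forall>y\<in>GT. f (gt_mult x y) = m (f x) (f y)) \<and>
     X closure_of (f ` GT) = topspace X)"

end

theory Submission
  imports Defs
begin

text \<open>In a Hausdorff semigroup topology on \<open>G(T)\<close> every non-zero element is isolated: multiplying
  by vertices on both sides cuts out a finite open neighbourhood. Hence \<open>\<tau>\<close> is compact iff every
  neighbourhood of \<open>0\<close> is cofinite iff \<open>\<tau> = \<tau>\<^sub>c\<close>, and a compact \<open>\<tau>\<close> is its own
  CLP-compactification, transported to any infinite carrier type.

  Conversely, let \<open>G(T)\<close> be dense in a CLP-compact Hausdorff topological semigroup \<open>S\<close>. Its
  isolated points stay isolated in \<open>S\<close>, and infinitely many isolated points always have a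
  cluster point, for otherwise they would form an infinite clopen discrete set. Applied to the
  pairwise orthogonal vertex idempotents, this forces them to converge to the zero \<open>0\<close> of \<open>S\<close>.
  Writing \<open>GEl i j k\<close> as the product of \<open>GEl i k k\<close>, the vertex \<open>k\<close> and \<open>GEl k j k\<close>, the outer
  factors cluster while the middle one tends to the absorbing \<open>0\<close>, so every sequence of distinct
  elements of \<open>G(T)\<close> tends to \<open>0\<close>: every neighbourhood of \<open>0\<close> is cofinite.\<close>

instance gt :: countable by countable_datatype

lemma GEl_in_GT [simp]: "GEl i j k \<in> GT \<longleftrightarrow> i \<le> k \<and> j \<le> k"
  unfolding GT_def by auto

lemma GZero_in_GT [simp]: "GZero \<in> GT"
  unfolding GT_def by auto

lemma gt_mult_assoc: "gt_mult (gt_mult x y) z = gt_mult x (gt_mult y z)"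
  by (cases x; cases y; cases z) (auto simp: max.assoc)

lemma gt_mult_in_GT: "x \<in> GT \<Longrightarrow> y \<in> GT \<Longrightarrow> gt_mult x y \<in> GT"
  by (cases x; cases y) auto

lemma continuous_map_mult_left:
  assumes "continuous_map (prod_topology X X) Y (\<lambda>(x, y). m x y)" "a \<in> topspace X"
  shows "continuous_map X Y (m a)"
proof -
  have "continuous_map X (prod_topology X X) (\<lambda>x. (a, x))"
    by (intro continuous_map_pairedI) (simp_all add: assms(2))
  from continuous_map_compose[OF this assms(1)] show ?thesis by (simp add: o_def)
qed

lemma continuous_map_mult_right:
  assumes "continuous_map (prod_topology X X) Y (\<lambda>(x, y). m x y)" "a \<in> topspace X"
  shows "continuous_map X Y (\<lambda>x. m x a)"
proof -
  have "continuous_map X (prod_topology X X) (\<lambda>x. (x, a))"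
    by (intro continuous_map_pairedI) (simp_all add: assms(2))
  from continuous_map_compose[OF this assms(1)] show ?thesis by (simp add: o_def)
qed

lemma continuous_map_mult_diag:
  assumes "continuous_map (prod_topology X X) Y (\<lambda>(x, y). m x y)"
  shows "continuous_map X Y (\<lambda>x. m x x)"
proof -
  have "continuous_map X (prod_topology X X) (\<lambda>x. (x, x))"
    by (intro continuous_map_pairedI) simp_all
  from continuous_map_compose[OF this assms] show ?thesis by (simp add: o_def)
qed

lemma continuous_map_mult_swap:
  assumes "continuous_map (prod_topology X X) Y (\<lambda>(x, y). m x y)"
  shows "continuous_map (prod_topology X X) Y (\<lambda>(x, y). m y x)"
  using continuous_map_compose[OF continuous_map_pairedI[OF continuous_map_snd continuous_map_fst]
      assms]
  by (simp add: o_def case_prod_beta')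

lemma openin_singleton_finite_nbhd:
  assumes "t1_space X" "openin X W" "finite W" "x \<in> W"
  shows "openin X {x}"
proof -
  have "closedin X (W - {x})"
    using assms(1,3) openin_subset[OF assms(2)] unfolding t1_space_closedin_finite by blast
  then have "openin X (W - (W - {x}))" by (rule openin_diff[OF assms(2)])
  moreover have "W - (W - {x}) = {x}" using assms(4) by blast
  ultimately show ?thesis by simp
qed

lemma openin_singleton_dense_subtopology:
  assumes "t1_space X" "X closure_of S = topspace X" "openin (subtopology X S) {x}"
  shows "openin X {x}"
proof -
  obtain V where V: "openin X V" "V \<inter> S = {x}"
    using assms(3) by (auto simp: openin_subtopology)
  then have x: "x \<in> topspace X" using openin_subset by blast
  have "V = V \<inter> X closure_of S" using assms(2) openin_subset[OF V(1)] by blast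
  also have "\<dots> \<subseteq> X closure_of (V \<inter> S)" by (rule openin_Int_closure_of_subset[OF V(1)])
  also have "\<dots> = {x}" by (simp add: V(2) closure_of_singleton[OF assms(1)] x)
  finally have "V = {x}" using V(2) by blast
  with V(1) show ?thesis by simp
qed

lemma finite_compactin_isolated:
  assumes "compactin X S" "\<forall>x\<in>S. openin X {x}"
  shows "finite S"
  using assms discrete_compactin_eq_finite[of S X] by (force simp: in_derived_set_of)

lemma compact_space_iff_cofinite_nbhds:
  assumes "z \<in> topspace X" "\<And>x. x \<in> topspace X - {z} \<Longrightarrow> openin X {x}"
  shows "compact_space X \<longleftrightarrow> (\<forall>U. openin X U \<and> z \<in> U \<longrightarrow> finite (topspace X - U))"
proof
  assume cpt: "compact_space X"
  show "\<forall>U. openin X U \<and> z \<in> U \<longrightarrow> finite (topspace X - U)"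
  proof (intro allI impI)
    fix U assume U: "openin X U \<and> z \<in> U"
    then have "compactin X (topspace X - U)"
      by (simp add: closedin_compact_space[OF cpt] closedin_diff)
    moreover have "\<forall>x \<in> topspace X - U. openin X {x}" using U assms(2) by blast
    ultimately show "finite (topspace X - U)"
      by (rule finite_compactin_isolated)
  qed
next
  assume cof: "\<forall>U. openin X U \<and> z \<in> U \<longrightarrow> finite (topspace X - U)"
  show "compact_space X" unfolding compact_space_alt
  proof (intro allI impI)
    fix \<U> assume \<U>: "(\<forall>U\<in>\<U>. openin X U) \<and> topspace X \<subseteq> \<Union>\<U>"
    then obtain U0 where U0: "U0 \<in> \<U>" "z \<in> U0" using assms(1) by blast
    have finite: "finite (topspace X - U0)" using cof U0 \<U> by blast
    have "\<forall>x \<in> topspace X - U0. \<exists>U\<in>\<U>. x \<in> U" using \<U> by blast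
    then obtain c where c: "\<forall>x \<in> topspace X - U0. c x \<in> \<U> \<and> x \<in> c x" by metis
    show "\<exists>\<F>. finite \<F> \<and> \<F> \<subseteq> \<U> \<and> topspace X \<subseteq> \<Union>\<F>"
      using finite c U0 by (intro exI[of _ "insert U0 (c ` (topspace X - U0))"]) auto
  qed
qed

lemma filterlim_dominant_coordinate:
  "filterlim (\<lambda>(i, j, k). k) sequentially
     (inf cofinite (principal {(i, j, k). i \<le> k \<and> j \<le> (k::nat)}))"
  unfolding filterlim_at_top eventually_inf_principal eventually_cofinite
proof
  fix K :: nat
  have "{t. \<not> (t \<in> {(i, j, k). i \<le> k \<and> j \<le> k} \<longrightarrow> K \<le> (case t of (i, j, k) \<Rightarrow> k))}
      \<subseteq> {..K} \<times> {..K} \<times> {..K}"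
    by auto
  then show "finite {t. \<not> (t \<in> {(i, j, k). i \<le> k \<and> j \<le> k} \<longrightarrow> K \<le> (case t of (i, j, k) \<Rightarrow> k))}"
    by (rule finite_subset) simp
qed

lemma compact_space_imp_CLP_compact: "compact_space X \<Longrightarrow> CLP_compact X"
  unfolding CLP_compact_def compact_space_alt by blast

definition clusterin :: "'a topology \<Rightarrow> ('b \<Rightarrow> 'a) \<Rightarrow> 'a \<Rightarrow> 'b filter \<Rightarrow> bool" where
  "clusterin X f l F \<longleftrightarrow>
     l \<in> topspace X \<and> (\<forall>U. openin X U \<and> l \<in> U \<longrightarrow> frequently (\<lambda>x. f x \<in> U) F)"

lemma frequently_cofinite_principal:
  "frequently P (inf cofinite (principal I)) \<longleftrightarrow> infinite {x \<in> I. P x}"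
  by (simp add: frequently_def eventually_inf_principal eventually_cofinite)

lemma clusterin_inf_principalE:
  assumes "clusterin X a l (inf F (principal N))" "openin X U" "l \<in> U" "eventually Q F"
  obtains n where "n \<in> N" "a n \<in> U" "Q n"
proof -
  have "frequently (\<lambda>n. a n \<in> U) (inf F (principal N))"
    using assms(1-3) by (simp add: clusterin_def)
  moreover have "eventually (\<lambda>n. n \<in> N \<and> Q n) (inf F (principal N))"
    using assms(4) by (auto simp: eventually_inf_principal elim: eventually_mono)
  ultimately have "frequently (\<lambda>n. (n \<in> N \<and> Q n) \<and> a n \<in> U) (inf F (principal N))"
    by (rule frequently_eventually_conj)
  then show ?thesis using that by (auto dest: frequently_ex)
qed

lemma clusterin_continuous_map_eventually_eq:
  assumes "clusterin X a l F" "continuous_map X Y h" "t1_space Y"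
    and "eventually (\<lambda>n. h (a n) = c) F"
  shows "h l = c"
proof (rule ccontr)
  assume "h l \<noteq> c"
  define U where "U = {x \<in> topspace X. h x \<in> topspace Y - {c}}"
  have "openin X U"
    unfolding U_def using assms(2,3)
    by (intro openin_continuous_map_preimage) (auto simp: t1_space_openin_delete_alt)
  moreover have "l \<in> U"
    using assms(1,2) \<open>h l \<noteq> c\<close> by (auto simp: U_def clusterin_def continuous_map_def)
  ultimately have "frequently (\<lambda>n. a n \<in> U) F"
    using assms(1) by (simp add: clusterin_def)
  from frequently_eventually_conj[OF this assms(4)] show False
    by (auto simp: U_def dest: frequently_ex)
qed

lemma CLP_compact_closedin_isolated_finite:
  assumes "t1_space X" "CLP_compact X" "closedin X B" "\<forall>b\<in>B. openin X {b}"
  shows "finite B"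
proof -
  define \<U> where "\<U> = insert (topspace X - B) ((\<lambda>b. {b}) ` B)"
  have B: "B \<subseteq> topspace X" using assms(3) closedin_subset by blast
  have "openin X (\<Union>((\<lambda>b. {b}) ` B))" using assms(4) by (intro openin_Union) auto
  then have "openin X B" by simp
  then have "closedin X (topspace X - B)" by (rule closedin_diff[OF closedin_topspace])
  moreover have "openin X (topspace X - B)" by (rule openin_diff[OF openin_topspace assms(3)])
  moreover have "closedin X {b} \<and> openin X {b}" if "b \<in> B" for b
    using that assms(4) B closedin_t1_singleton[OF assms(1)] by auto
  ultimately have "\<forall>U\<in>\<U>. closedin X U \<and> openin X U" by (auto simp: \<U>_def)
  moreover have "topspace X \<subseteq> \<Union>\<U>" by (auto simp: \<U>_def)
  ultimately obtain \<F> where \<F>: "finite \<F>" "\<F> \<subseteq> \<U>" "topspace X \<subseteq> \<Union>\<F>"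
    using assms(2) unfolding CLP_compact_def by meson
  have "(\<lambda>b. {b}) ` B \<subseteq> \<F>"
  proof
    fix S assume "S \<in> (\<lambda>b. {b}) ` B"
    then obtain b where b: "b \<in> B" "S = {b}" by blast
    then have "b \<in> topspace X" using B by blast
    then obtain T where "T \<in> \<F>" "b \<in> T" using \<F>(3) by blast
    with \<F>(2) b show "S \<in> \<F>" by (auto simp: \<U>_def)
  qed
  then show "finite B"
    using \<F>(1) finite_subset finite_image_iff[of "\<lambda>b. {b}" B] by (auto simp: inj_on_def)
qed

text \<open>Without a cluster point the image \<open>a ` N\<close> would be closed, hence finite by CLP-compactness
  as it is discrete; but a value taken infinitely often is a cluster point.\<close>
lemma CLP_compact_clusterin_isolated:
  assumes "t1_space X" "CLP_compact X" "infinite N" "\<forall>n\<in>N. openin X {a n}"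
  shows "\<exists>l. clusterin X a l (inf cofinite (principal N))"
proof (rule ccontr)
  assume "\<not> ?thesis"
  then have no_cluster: "\<exists>U. openin X U \<and> l \<in> U \<and> finite {n \<in> N. a n \<in> U}"
    if "l \<in> topspace X" for l
    using that by (auto simp: clusterin_def frequently_cofinite_principal)
  have B: "a ` N \<subseteq> topspace X" using assms(4) openin_subset by blast
  have "openin X (topspace X - a ` N)"
  proof (subst openin_subopen, intro ballI)
    fix x assume x: "x \<in> topspace X - a ` N"
    then obtain U where U: "openin X U" "x \<in> U" "finite {n \<in> N. a n \<in> U}"
      using no_cluster by blast
    have "U \<inter> a ` N = a ` {n \<in> N. a n \<in> U}" by auto
    then have "finite (U \<inter> a ` N)" using U(3) by simp
    then have "closedin X (U \<inter> a ` N)"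
      using assms(1) B unfolding t1_space_closedin_finite by blast
    then have "openin X (U - U \<inter> a ` N)" by (rule openin_diff[OF U(1)])
    moreover have "U - U \<inter> a ` N \<subseteq> topspace X - a ` N"
      using openin_subset[OF U(1)] by blast
    ultimately show "\<exists>T. openin X T \<and> x \<in> T \<and> T \<subseteq> topspace X - a ` N"
      using U(2) x by blast
  qed
  then have "closedin X (a ` N)" using B by (simp add: closedin_def)
  then have "finite (a ` N)"
    using assms by (intro CLP_compact_closedin_isolated_finite) auto
  then obtain n0 where n0: "n0 \<in> N" "infinite {n \<in> N. a n = a n0}"
    using pigeonhole_infinite[OF assms(3)] by blast
  then obtain U where "openin X U" "a n0 \<in> U" "finite {n \<in> N. a n \<in> U}"
    using no_cluster B by blast
  then have "finite {n \<in> N. a n = a n0}" by (auto elim: rev_finite_subset)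
  with n0(2) show False by contradiction
qed

lemma CLP_compact_clusterin_isolated_frequently:
  assumes "t1_space X" "CLP_compact X" "\<forall>n\<in>I. openin X {a n}"
    and "frequently (\<lambda>n. n \<in> N) (inf cofinite (principal I))"
  shows "\<exists>l. clusterin X a l (inf (inf cofinite (principal I)) (principal N))"
proof -
  have "infinite (I \<inter> N)"
    using assms(4) unfolding frequently_cofinite_principal by (simp add: Int_def)
  then obtain l where "clusterin X a l (inf cofinite (principal (I \<inter> N)))"
    using CLP_compact_clusterin_isolated[OF assms(1,2)] assms(3) by blast
  then show ?thesis by (auto simp: inf_assoc)
qed

lemma limitin_compose_filterlim:
  "limitin X f l G \<Longrightarrow> filterlim g G F \<Longrightarrow> limitin X (\<lambda>x. f (g x)) l F"
  by (auto simp: limitin_def filterlim_iff)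

lemma limitin_mult_right_zero:
  assumes cont: "continuous_map (prod_topology X X) X (\<lambda>(x, y). m x y)"
    and zero: "\<forall>x\<in>topspace X. m x z = z"
    and cluster: "\<And>N. frequently (\<lambda>n. n \<in> N) F \<Longrightarrow> \<exists>l. clusterin X a l (inf F (principal N))"
    and lim: "limitin X b z F"
  shows "limitin X (\<lambda>n. m (a n) (b n)) z F"
  unfolding limitin_def
proof (intro conjI allI impI)
  show z: "z \<in> topspace X" using lim by (rule limitin_topspace)
  fix V assume V: "openin X V \<and> z \<in> V"
  show "eventually (\<lambda>n. m (a n) (b n) \<in> V) F"
  proof (rule ccontr)
    define N where "N = {n. m (a n) (b n) \<notin> V}"
    assume "\<not> ?thesis"
    then have "frequently (\<lambda>n. n \<in> N) F" by (simp add: N_def not_eventually)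
    then obtain l where l: "clusterin X a l (inf F (principal N))" using cluster by blast
    then have "l \<in> topspace X" by (simp add: clusterin_def)
    define Q where "Q = {p \<in> topspace (prod_topology X X). (\<lambda>(x, y). m x y) p \<in> V}"
    have "openin (prod_topology X X) Q"
      unfolding Q_def using openin_continuous_map_preimage[OF cont] V by blast
    moreover have "(l, z) \<in> Q" using \<open>l \<in> topspace X\<close> z zero V by (simp add: Q_def)
    ultimately have "\<exists>P W. openin X P \<and> openin X W \<and> l \<in> P \<and> z \<in> W \<and> P \<times> W \<subseteq> Q"
      by (simp add: openin_prod_topology_alt)
    then obtain P W where PW: "openin X P" "openin X W" "l \<in> P" "z \<in> W" "P \<times> W \<subseteq> Q"
      by blast
    have "eventually (\<lambda>n. b n \<in> W) F" using lim PW(2,4) by (rule limitinD)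
    then obtain n where "n \<in> N" "a n \<in> P" "b n \<in> W"
      using clusterin_inf_principalE[OF l PW(1,3)] by blast
    then show False using PW(5) by (auto simp: N_def Q_def)
  qed
qed

text \<open>A cluster point \<open>\<nu>\<close> of the idempotents outside a neighbourhood \<open>W\<close> of \<open>z\<close> satisfies
  \<open>v l \<nu> = z\<close> for every \<open>l\<close>, hence \<open>\<nu> \<nu> = z \<in> W\<close>; but \<open>\<nu> \<nu>\<close> is approximated by the
  \<open>v n v n = v n \<notin> W\<close>.\<close>
lemma limitin_orthogonal_idempotents:
  assumes t1: "t1_space X" and CLP: "CLP_compact X"
    and cont: "continuous_map (prod_topology X X) X (\<lambda>(x, y). m x y)"
    and z: "z \<in> topspace X"
    and isolated: "\<And>i. openin X {v i}"
    and idem: "\<And>i. m (v i) (v i) = v i"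
    and orth: "\<And>i j. i \<noteq> j \<Longrightarrow> m (v i) (v j) = z"
  shows "limitin X v z cofinite"
  unfolding limitin_def
proof (intro conjI allI impI z)
  fix W assume W: "openin X W \<and> z \<in> W"
  show "eventually (\<lambda>i. v i \<in> W) cofinite"
  proof (rule ccontr)
    define N where "N = {i. v i \<notin> W}"
    assume "\<not> ?thesis"
    then have "infinite N" by (simp add: N_def eventually_cofinite)
    then obtain \<nu> where \<nu>: "clusterin X v \<nu> (inf cofinite (principal N))"
      using CLP_compact_clusterin_isolated[OF t1 CLP] isolated by blast
    then have \<nu>X: "\<nu> \<in> topspace X" by (simp add: clusterin_def)
    have vX: "v i \<in> topspace X" for i using isolated openin_subset by blast
    have annihilated: "m (v l) \<nu> = z" for l
    proof (rule clusterin_continuous_map_eventually_eq[OF \<nu> _ t1])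
      show "continuous_map X X (m (v l))" by (rule continuous_map_mult_left[OF cont vX])
      have "eventually (\<lambda>i. i \<noteq> l) cofinite" by (simp add: eventually_cofinite)
      then show "eventually (\<lambda>i. m (v l) (v i) = z) (inf cofinite (principal N))"
        unfolding eventually_inf_principal by (rule eventually_mono) (simp add: orth)
    qed
    have "m \<nu> \<nu> = z"
    proof (rule clusterin_continuous_map_eventually_eq[OF \<nu> _ t1, where h = "\<lambda>x. m x \<nu>"])
      show "continuous_map X X (\<lambda>x. m x \<nu>)" by (rule continuous_map_mult_right[OF cont \<nu>X])
    qed (simp add: annihilated)
    then have \<nu>P: "\<nu> \<in> {x \<in> topspace X. m x x \<in> W}" using \<nu>X W by simp
    have "openin X {x \<in> topspace X. m x x \<in> W}"
      using openin_continuous_map_preimage[OF continuous_map_mult_diag[OF cont]] W by blast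
    then obtain i where "i \<in> N" "v i \<in> {x \<in> topspace X. m x x \<in> W}"
      using clusterin_inf_principalE[OF \<nu> _ \<nu>P eventually_True] by blast
    then show False by (simp add: N_def idem)
  qed
qed

lemma top_semigroup_homeomorphic_maps:
  assumes S: "top_semigroup X m" and hg: "homeomorphic_maps X Y h g"
  shows "top_semigroup Y (\<lambda>a b. h (m (g a) (g b)))"
proof -
  have h: "continuous_map X Y h" and g: "continuous_map Y X g"
    and gh: "\<And>x. x \<in> topspace X \<Longrightarrow> g (h x) = x"
    using hg by (auto simp: homeomorphic_maps_def)
  have gY: "g y \<in> topspace X" if "y \<in> topspace Y" for y
    using g that by (auto simp: continuous_map_def)
  have hX: "h x \<in> topspace Y" if "x \<in> topspace X" for x
    using h that by (auto simp: continuous_map_def)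
  have "Hausdorff_space Y"
    using S hg homeomorphic_Hausdorff_space homeomorphic_space_def top_semigroup_def by metis
  moreover have "continuous_map (prod_topology Y Y) Y (\<lambda>(a, b). h (m (g a) (g b)))"
  proof -
    have "continuous_map (prod_topology Y Y) (prod_topology X X) (\<lambda>(a, b). (g a, g b))"
      by (simp add: continuous_map_prod_top g)
    moreover have "continuous_map (prod_topology X X) X (\<lambda>(x, y). m x y)"
      using S by (simp add: top_semigroup_def)
    ultimately have
      "continuous_map (prod_topology Y Y) Y (h \<circ> (\<lambda>(x, y). m x y) \<circ> (\<lambda>(a, b). (g a, g b)))"
      by (intro continuous_map_compose[OF _ h] continuous_map_compose)
    moreover have "h \<circ> (\<lambda>(x, y). m x y) \<circ> (\<lambda>(a, b). (g a, g b)) = (\<lambda>(a, b). h (m (g a) (g b)))"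
      by (auto simp: fun_eq_iff)
    ultimately show ?thesis by simp
  qed
  ultimately show ?thesis
    using S gY hX gh by (auto simp: top_semigroup_def)
qed

lemma homeomorphic_maps_pullback_inv:
  assumes "inj h"
  shows "homeomorphic_maps X (pullback_topology (h ` topspace X) (inv h) X) h (inv h)"
proof -
  let ?Y = "pullback_topology (h ` topspace X) (inv h) X"
  have inv_h: "inv h (h x) = x" for x by (rule inv_f_f[OF assms])
  have "continuous_map ?Y X (inv h)"
    using continuous_map_pullback[OF continuous_map_id, of "h ` topspace X" "inv h"]
    by (simp add: o_def)
  moreover have "continuous_map X ?Y h"
    by (rule continuous_map_pullback') (auto simp: inv_h o_def)
  moreover have "topspace ?Y = h ` topspace X"
    by (auto simp: topspace_pullback_topology inv_h)
  ultimately show ?thesis by (auto simp: homeomorphic_maps_def inv_h)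
qed

lemma is_semitop_topologyD:
  assumes "is_semitop_topology \<tau>"
  shows "topspace \<tau> = GT" "Hausdorff_space \<tau>"
    and "continuous_map (prod_topology \<tau> \<tau>) \<tau> (\<lambda>(x, y). gt_mult x y)"
  using assms by (auto simp: is_semitop_topology_def)

lemma is_semitop_topology_top_semigroup: "is_semitop_topology \<tau> \<Longrightarrow> top_semigroup \<tau> gt_mult"
  by (auto simp: is_semitop_topology_def top_semigroup_def gt_mult_in_GT gt_mult_assoc)

text \<open>Multiplying by the vertices \<open>i\<close> and \<open>j\<close> on both sides kills every element except the
  \<open>GEl i j k'\<close>, and left multiplication by \<open>GEl i i (k + 1)\<close> moves exactly those with \<open>k' \<le> k\<close>:
  this gives a finite open neighbourhood of \<open>GEl i j k\<close>.\<close>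
lemma semitop_openin_singleton:
  assumes "is_semitop_topology \<tau>" "x \<in> GT" "x \<noteq> GZero"
  shows "openin \<tau> {x}"
proof -
  note \<tau> = is_semitop_topologyD[OF assms(1)]
  obtain i j k where x: "x = GEl i j k" "i \<le> k" "j \<le> k" using assms(2,3) by (cases x) auto
  have left: "continuous_map \<tau> \<tau> (gt_mult a)" if "a \<in> GT" for a
    using continuous_map_mult_left[OF \<tau>(3)] that \<tau>(1) by simp
  have right: "continuous_map \<tau> \<tau> (\<lambda>y. gt_mult y a)" if "a \<in> GT" for a
    using continuous_map_mult_right[OF \<tau>(3)] that \<tau>(1) by simp
  let ?\<phi> = "\<lambda>y. gt_mult (gt_mult (GEl i i k) y) (GEl j j k)"
  let ?\<psi> = "\<lambda>y. gt_mult (GEl i i (Suc k)) (?\<phi> y)"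
  have \<phi>: "continuous_map \<tau> \<tau> ?\<phi>"
    using continuous_map_compose[OF left right] x by (simp add: o_def)
  have \<psi>: "continuous_map \<tau> \<tau> ?\<psi>"
    using continuous_map_compose[OF \<phi> left] x by (simp add: o_def)
  define W where "W = topspace \<tau> - {y \<in> topspace \<tau>. ?\<psi> y = ?\<phi> y}"
  have "openin \<tau> W"
    unfolding W_def
    by (rule openin_diff[OF openin_topspace closedin_continuous_maps_eq[OF \<tau>(2) \<psi> \<phi>]])
  moreover have "W \<subseteq> (\<lambda>k'. GEl i j k') ` {..k}"
  proof
    fix y assume "y \<in> W"
    then show "y \<in> (\<lambda>k'. GEl i j k') ` {..k}"
      by (cases y) (auto simp: W_def split: if_splits)
  qed
  then have "finite W" by (rule finite_subset) simp
  moreover have "x \<in> W" using x \<tau>(1) by (simp add: W_def)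
  ultimately show ?thesis
    using openin_singleton_finite_nbhd[OF Hausdorff_imp_t1_space[OF \<tau>(2)]] by blast
qed

lemma semitop_compact_iff_cofinite:
  assumes "is_semitop_topology \<tau>"
  shows "compact_space \<tau> \<longleftrightarrow> (\<forall>U. openin \<tau> U \<and> GZero \<in> U \<longrightarrow> finite (GT - U))"
  using compact_space_iff_cofinite_nbhds[of GZero \<tau>] semitop_openin_singleton[OF assms]
    is_semitop_topologyD(1)[OF assms] by auto

lemma istopology_tau_c: "istopology (\<lambda>U. U \<subseteq> GT \<and> (GZero \<in> U \<longrightarrow> finite (GT - U)))"
  unfolding istopology_def
proof (intro conjI allI impI)
  fix \<K> :: "gt set set"
  assume \<K>: "\<forall>K\<in>\<K>. K \<subseteq> GT \<and> (GZero \<in> K \<longrightarrow> finite (GT - K))"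
  then show "\<Union>\<K> \<subseteq> GT" by blast
  assume "GZero \<in> \<Union>\<K>"
  then obtain K where "K \<in> \<K>" "GZero \<in> K" by blast
  with \<K> show "finite (GT - \<Union>\<K>)" by (meson Diff_mono Union_upper finite_subset order_refl)
qed (auto simp: Diff_Int)

lemma openin_tau_c: "openin tau_c U \<longleftrightarrow> U \<subseteq> GT \<and> (GZero \<in> U \<longrightarrow> finite (GT - U))"
  by (simp add: tau_c_def istopology_tau_c)

lemma semitop_eq_tau_c_iff:
  assumes "is_semitop_topology \<tau>"
  shows "\<tau> = tau_c \<longleftrightarrow> (\<forall>U. openin \<tau> U \<and> GZero \<in> U \<longrightarrow> finite (GT - U))"
proof
  assume cofinite: "\<forall>U. openin \<tau> U \<and> GZero \<in> U \<longrightarrow> finite (GT - U)"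
  note \<tau> = is_semitop_topologyD[OF assms]
  show "\<tau> = tau_c" unfolding topology_eq
  proof (intro allI iffI)
    fix S assume "openin \<tau> S"
    then show "openin tau_c S" using cofinite openin_subset \<tau>(1) by (fastforce simp: openin_tau_c)
  next
    fix S assume S: "openin tau_c S"
    show "openin \<tau> S"
    proof (cases "GZero \<in> S")
      case True
      then have "closedin \<tau> (GT - S)"
        using S Hausdorff_imp_t1_space[OF \<tau>(2)] \<tau>(1)
        unfolding openin_tau_c t1_space_closedin_finite by blast
      then have "openin \<tau> (topspace \<tau> - (GT - S))" by (rule openin_diff[OF openin_topspace])
      moreover have "topspace \<tau> - (GT - S) = S" using S \<tau>(1) by (auto simp: openin_tau_c)
      ultimately show ?thesis by simp
    next
      case False
      then have "\<forall>x\<in>S. openin \<tau> {x}"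
        using S semitop_openin_singleton[OF assms] by (auto simp: openin_tau_c)
      then have "openin \<tau> (\<Union>x\<in>S. {x})" by (intro openin_Union) auto
      then show ?thesis by simp
    qed
  qed
qed (simp add: openin_tau_c)

lemma semitop_compact_iff_tau_c: "is_semitop_topology \<tau> \<Longrightarrow> compact_space \<tau> \<longleftrightarrow> \<tau> = tau_c"
  by (simp add: semitop_compact_iff_cofinite semitop_eq_tau_c_iff)

locale GT_CLP_extension =
  fixes \<tau> :: "gt topology" and X :: "'a topology" and m :: "'a \<Rightarrow> 'a \<Rightarrow> 'a" and f :: "gt \<Rightarrow> 'a"
  assumes semitop: "is_semitop_topology \<tau>"
    and top_semigroup: "top_semigroup X m"
    and CLP: "CLP_compact X"
    and embedding: "embedding_map \<tau> X f"
    and hom: "\<And>x y. x \<in> GT \<Longrightarrow> y \<in> GT \<Longrightarrow> f (gt_mult x y) = m (f x) (f y)"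
    and dense: "X closure_of (f ` GT) = topspace X"
begin

lemma Hausdorff: "Hausdorff_space X"
  using top_semigroup by (simp add: top_semigroup_def)

lemma t1: "t1_space X"
  by (rule Hausdorff_imp_t1_space[OF Hausdorff])

lemma continuous_mult: "continuous_map (prod_topology X X) X (\<lambda>(x, y). m x y)"
  using top_semigroup by (simp add: top_semigroup_def)

lemma homeomorphic: "homeomorphic_map \<tau> (subtopology X (f ` GT)) f"
  using embedding by (simp add: embedding_map_def is_semitop_topologyD(1)[OF semitop])

lemma f_in_topspace: "x \<in> GT \<Longrightarrow> f x \<in> topspace X"
  using homeomorphic_imp_surjective_map[OF homeomorphic] is_semitop_topologyD(1)[OF semitop]
  by auto

lemma openin_image: "openin \<tau> U \<Longrightarrow> openin (subtopology X (f ` GT)) (f ` U)"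
  using homeomorphic_map_openness_eq[OF homeomorphic] by blast

lemma openin_singleton_f: "x \<in> GT \<Longrightarrow> x \<noteq> GZero \<Longrightarrow> openin X {f x}"
  using openin_image[OF semitop_openin_singleton[OF semitop]]
  by (intro openin_singleton_dense_subtopology[OF t1 dense]) auto

lemma f_GZero_right_zero:
  assumes "x \<in> topspace X"
  shows "m x (f GZero) = f GZero"
proof (rule forall_in_closure_of_eq[OF _ Hausdorff,
      where f = "\<lambda>x. m x (f GZero)" and g = "\<lambda>_. f GZero"])
  show "x \<in> X closure_of (f ` GT)" using assms dense by simp
  show "continuous_map X X (\<lambda>x. m x (f GZero))"
    by (rule continuous_map_mult_right[OF continuous_mult f_in_topspace]) simp
  show "continuous_map X X (\<lambda>_. f GZero)" using f_in_topspace by simp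
  show "m y (f GZero) = f GZero" if "y \<in> f ` GT" for y
    using that hom[symmetric] by auto
qed

lemma f_GZero_left_zero:
  assumes "x \<in> topspace X"
  shows "m (f GZero) x = f GZero"
proof (rule forall_in_closure_of_eq[OF _ Hausdorff,
      where f = "m (f GZero)" and g = "\<lambda>_. f GZero"])
  show "x \<in> X closure_of (f ` GT)" using assms dense by simp
  show "continuous_map X X (m (f GZero))"
    by (rule continuous_map_mult_left[OF continuous_mult f_in_topspace]) simp
  show "continuous_map X X (\<lambda>_. f GZero)" using f_in_topspace by simp
  show "m (f GZero) y = f GZero" if "y \<in> f ` GT" for y
    using that hom[symmetric] by auto
qed

lemma vertices_limitin: "limitin X (\<lambda>n. f (GEl n n n)) (f GZero) sequentially"
  unfolding cofinite_eq_sequentially[symmetric]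
proof (rule limitin_orthogonal_idempotents[OF t1 CLP continuous_mult])
  show "f GZero \<in> topspace X" by (simp add: f_in_topspace)
  show "openin X {f (GEl n n n)}" for n by (simp add: openin_singleton_f)
  show "m (f (GEl n n n)) (f (GEl n n n)) = f (GEl n n n)" for n
    using hom[of "GEl n n n" "GEl n n n"] by simp
  show "m (f (GEl l l l)) (f (GEl n n n)) = f GZero" if "l \<noteq> n" for l n
    using hom[of "GEl l l l" "GEl n n n"] that by simp
qed

lemma GEl_limitin:
  "limitin X (\<lambda>(i, j, k). f (GEl i j k)) (f GZero)
     (inf cofinite (principal {(i, j, k). i \<le> k \<and> j \<le> k}))"
proof -
  define E where "E = {(i, j, k). i \<le> k \<and> (j::nat) \<le> k}"
  define F where "F = inf cofinite (principal E)"
  define left :: "nat \<times> nat \<times> nat \<Rightarrow> 'a" where "left = (\<lambda>(i, j, k). f (GEl i k k))"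
  define vertex :: "nat \<times> nat \<times> nat \<Rightarrow> 'a" where "vertex = (\<lambda>(i, j, k). f (GEl k k k))"
  define right :: "nat \<times> nat \<times> nat \<Rightarrow> 'a" where "right = (\<lambda>(i, j, k). f (GEl k j k))"
  from limitin_compose_filterlim[OF vertices_limitin filterlim_dominant_coordinate]
  have vertex_limitin: "limitin X vertex (f GZero) F"
    by (simp add: vertex_def F_def E_def case_prod_unfold)
  have right_cluster: "\<exists>l. clusterin X right l (inf F (principal N))"
    if "frequently (\<lambda>t. t \<in> N) F" for N
    using CLP_compact_clusterin_isolated_frequently[OF t1 CLP _ that[unfolded F_def]]
    by (auto simp: F_def right_def E_def openin_singleton_f)
  have left_cluster: "\<exists>l. clusterin X left l (inf F (principal N))"
    if "frequently (\<lambda>t. t \<in> N) F" for N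
    using CLP_compact_clusterin_isolated_frequently[OF t1 CLP _ that[unfolded F_def]]
    by (auto simp: F_def left_def E_def openin_singleton_f)
  have "limitin X (\<lambda>t. m (vertex t) (right t)) (f GZero) F"
    using limitin_mult_right_zero[OF continuous_map_mult_swap[OF continuous_mult] _
        right_cluster vertex_limitin]
    by (simp add: f_GZero_left_zero)
  then have "limitin X (\<lambda>t. m (left t) (m (vertex t) (right t))) (f GZero) F"
    using limitin_mult_right_zero[OF continuous_mult _ left_cluster]
    by (simp add: f_GZero_right_zero)
  moreover have
    "eventually (\<lambda>t. m (left t) (m (vertex t) (right t)) = (\<lambda>(i, j, k). f (GEl i j k)) t) F"
    unfolding F_def eventually_inf_principal
    by (intro always_eventually) (auto simp: E_def left_def vertex_def right_def hom[symmetric])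
  ultimately show ?thesis
    unfolding E_def F_def by (rule limitin_transform_eventually[rotated])
qed

lemma cofinite_nbhds_GZero:
  assumes "openin \<tau> U" "GZero \<in> U"
  shows "finite (GT - U)"
proof -
  obtain V where V: "openin X V" "f ` U = V \<inter> f ` GT"
    using openin_image[OF assms(1)] by (auto simp: openin_subtopology)
  have "U \<subseteq> GT" using openin_subset[OF assms(1)] is_semitop_topologyD(1)[OF semitop] by simp
  have "eventually (\<lambda>(i, j, k). f (GEl i j k) \<in> V)
      (inf cofinite (principal {(i, j, k). i \<le> k \<and> j \<le> k}))"
    using limitinD[OF GEl_limitin V(1)] V(2) assms(2) by (auto simp: case_prod_unfold)
  then have "finite {(i, j, k). i \<le> k \<and> j \<le> k \<and> f (GEl i j k) \<notin> V}"
    by (simp add: eventually_inf_principal eventually_cofinite case_prod_unfold)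
  moreover have "GT - U \<subseteq> (\<lambda>(i, j, k). GEl i j k) ` {(i, j, k). i \<le> k \<and> j \<le> k \<and> f (GEl i j k) \<notin> V}"
  proof
    fix d assume d: "d \<in> GT - U"
    then obtain i j k where ijk: "d = GEl i j k" "i \<le> k" "j \<le> k"
      using assms(2) by (cases d) auto
    have "f d \<notin> V"
    proof
      assume "f d \<in> V"
      then obtain u where "u \<in> U" "f d = f u" using V(2) d by auto
      then show False
        using d \<open>U \<subseteq> GT\<close> inj_onD[OF homeomorphic_imp_injective_map[OF homeomorphic]]
          is_semitop_topologyD(1)[OF semitop] by blast
    qed
    with ijk show "d \<in> (\<lambda>(i, j, k). GEl i j k) ` {(i, j, k). i \<le> k \<and> j \<le> k \<and> f (GEl i j k) \<notin> V}"
      by force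
  qed
  ultimately show ?thesis by (rule finite_surj)
qed

end

lemma dense_embeds_imp_compact:
  assumes "is_semitop_topology \<tau>" "top_semigroup X m" "CLP_compact X" "dense_embeds \<tau> X m"
  shows "compact_space \<tau>"
proof -
  obtain f where "embedding_map \<tau> X f" "\<forall>x\<in>GT. \<forall>y\<in>GT. f (gt_mult x y) = m (f x) (f y)"
    "X closure_of (f ` GT) = topspace X"
    using assms(4) unfolding dense_embeds_def by blast
  with assms(1-3) have "GT_CLP_extension \<tau> X m f" by unfold_locales simp_all
  then have "\<forall>U. openin \<tau> U \<and> GZero \<in> U \<longrightarrow> finite (GT - U)"
    using GT_CLP_extension.cofinite_nbhds_GZero by blast
  then show ?thesis using semitop_compact_iff_cofinite[OF assms(1)] by blast
qed

lemma compact_imp_dense_embeds: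
  assumes "is_semitop_topology \<tau>" "infinite (UNIV :: 'a set)" "compact_space \<tau>"
  shows "\<exists>(X :: 'a topology) m. top_semigroup X m \<and> CLP_compact X \<and> dense_embeds \<tau> X m"
proof -
  obtain e :: "nat \<Rightarrow> 'a" where "inj e"
    using infinite_iff_countable_subset[THEN iffD1, OF assms(2)] by blast
  define h :: "gt \<Rightarrow> 'a" where "h = e \<circ> to_nat"
  have "inj h" unfolding h_def using \<open>inj e\<close> by (simp add: inj_compose)
  define X where "X = pullback_topology (h ` GT) (inv h) \<tau>"
  define m where "m a b = h (gt_mult (inv h a) (inv h b))" for a b
  have hm: "homeomorphic_maps \<tau> X h (inv h)"
    using homeomorphic_maps_pullback_inv[OF \<open>inj h\<close>, of \<tau>]
    by (simp add: X_def is_semitop_topologyD(1)[OF assms(1)])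
  then have "homeomorphic_map \<tau> X h" using homeomorphic_maps_map by blast
  have "top_semigroup X m"
    unfolding m_def
    by (rule top_semigroup_homeomorphic_maps[OF is_semitop_topology_top_semigroup[OF assms(1)] hm])
  moreover have "CLP_compact X"
    using assms(3) hm homeomorphic_compact_space homeomorphic_space_def
      compact_space_imp_CLP_compact
    by metis
  moreover have "dense_embeds \<tau> X m"
    unfolding dense_embeds_def
  proof (intro exI conjI ballI)
    show "embedding_map \<tau> X h"
      using \<open>homeomorphic_map \<tau> X h\<close> surjective_embedding_map by blast
    show "h (gt_mult x y) = m (h x) (h y)" for x y
      by (simp add: m_def inv_f_f[OF \<open>inj h\<close>])
    show "X closure_of h ` GT = topspace X"
      using homeomorphic_imp_surjective_map[OF \<open>homeomorphic_map \<tau> X h\<close>]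
      by (simp add: is_semitop_topologyD(1)[OF assms(1)])
  qed
  ultimately show ?thesis by blast
qed

theorem lemma4p7:
  fixes \<tau> :: "gt topology"
  assumes "is_semitop_topology \<tau>"
    and "infinite (UNIV :: 'a set)"
  shows "((\<exists>(X :: 'a topology) m. top_semigroup X m \<and> CLP_compact X \<and> dense_embeds \<tau> X m)
            \<longleftrightarrow> compact_space \<tau>)
         \<and> (compact_space \<tau> \<longleftrightarrow> \<tau> = tau_c)"
  using dense_embeds_imp_compact[OF assms(1)] compact_imp_dense_embeds[OF assms]
    semitop_compact_iff_tau_c[OF assms(1)]
  by blast

end
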